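(* Let $F$ be an infinite field. The pairwise distinct commutators $[z_1,a_1y_1,\dots,a_ny_n,z_2,b_1y_1,\dots,b_ny_n]$, where $z_1,z_2$ are distinct variables of degree $1$, $y_1,\dots,y_n$ are distinct variables of degree $0$, $n\ge0$ and $a_i,b_i\ge0$, are linearly independent modulo the $T_{\mathbb{Z}_3}$-ideal $I$ of $\mathbb{Z}_3$-graded identities of $UT_3(F)^{(-)}$.
   Context: $UT_3(F)^{(-)}$: $3\times3$ upper triangular matrices with bracket $[a,b]=ab-ba$ and canonical $\mathbb{Z}_3$-grading (degree-$k$ component spanned by $e_{ij}$ with $j-i=k$). The free Lie algebra is generated by variables of degree $0$ ($y_i$), $1$ ($z_i$), $2$ ($w_i$). Commutators are left normed; $[z_1,a_1y_1,\dots,a_ny_n,z_2,b_1y_1,\dots,b_ny_n]$ denotes $z_1$ followed by $y_i$ repeated $a_i$ times ($i=1,\dots,n$), then $z_2$, then $y_i$ repeated $b_i$ times. *)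

theory Defs
  imports "Jordan_Normal_Form.Matrix"
begin

text \<open>UT_3(F) is realised as 3x3 matrices over F; the canonical Z_3-grading:
  the degree-k component (k = 0,1,2) consists of the 3x3 matrices supported on
  entries e_ij with j - i = k (i, j indexed 0,1,2).\<close>
definition UT3_comp :: "nat \<Rightarrow> 'a::field mat set" where
  "UT3_comp k = {A. A \<in> carrier_mat 3 3 \<and>
      (\<forall>i<3. \<forall>j<3. A $$ (i,j) \<noteq> 0 \<longrightarrow> j = i + k)}"

definition lie_br :: "'a::field mat \<Rightarrow> 'a mat \<Rightarrow> 'a mat" where
  "lie_br A B = A * B - B * A"

fun lnc :: "'a::field mat \<Rightarrow> 'a mat list \<Rightarrow> 'a mat" where
  "lnc x [] = x"
| "lnc x (u # us) = lnc (lie_br x u) us"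

definition ypart :: "nat list \<Rightarrow> (nat \<Rightarrow> 'a::field mat) \<Rightarrow> 'a mat list" where
  "ypart a Y = concat (map (\<lambda>i. replicate (a ! i) (Y i)) [0..<length a])"

definition comm_eval :: "nat list \<Rightarrow> nat list \<Rightarrow> (nat \<Rightarrow> 'a::field mat)
    \<Rightarrow> 'a mat \<Rightarrow> 'a mat \<Rightarrow> 'a mat" where
  "comm_eval a b Y Z1 Z2 = lnc Z1 (ypart a Y @ [Z2] @ ypart b Y)"

end

theory Submission
  imports Defs "HOL-Computational_Algebra.Polynomial"
begin

text \<open>Substitute y_i := diag(0, x_i, x'_i), z_1 := e_12 and z_2 := e_23. Every bracket with a
  diagonal matrix rescales the entries of a strictly upper triangular matrix, and [e_12, e_23] = e_13,
  so the commutator indexed by (a, b) evaluates to x^a x'^b e_13. Distinct pairs (a, b) give distinct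
  monomials, and over an infinite field distinct monomials are linearly independent as functions.\<close>

definition list_monomial :: "nat list \<Rightarrow> (nat \<Rightarrow> 'a::comm_semiring_1) \<Rightarrow> 'a" where
  "list_monomial e x = (\<Prod>i<length e. x i ^ (e ! i))"

lemma list_monomial_Nil [simp]: "list_monomial [] x = 1"
  by (simp add: list_monomial_def)

lemma list_monomial_Cons [simp]:
  "list_monomial (d # e) x = x 0 ^ d * list_monomial e (\<lambda>i. x (Suc i))"
  unfolding list_monomial_def by (simp only: length_Cons prod.lessThan_Suc_shift) simp

lemma list_monomial_append:
  "list_monomial (a @ b) x = list_monomial a x * list_monomial b (\<lambda>i. x (length a + i))"
  by (induction a arbitrary: x) (simp_all add: mult.assoc)

lemma list_monomial_snoc:
  "list_monomial (a @ [k]) x = list_monomial a x * x (length a) ^ k"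
  by (simp add: list_monomial_append)

lemma univariate_monomials_independent:
  fixes c :: "nat \<Rightarrow> 'a::idom"
  assumes "infinite (UNIV :: 'a set)" and "finite D"
    and "\<forall>s. (\<Sum>d\<in>D. c d * s ^ d) = 0"
  shows "\<forall>d\<in>D. c d = 0"
proof -
  define p where "p = (\<Sum>d\<in>D. monom (c d) d)"
  have "poly p s = 0" for s
    using assms(3) by (simp add: p_def poly_sum poly_monom)
  hence "p = 0"
    using assms(1) poly_roots_finite[of p] by auto
  moreover have "coeff p d = c d" if "d \<in> D" for d
    using that assms(2) by (simp add: p_def coeff_sum coeff_monom)
  ultimately show ?thesis by simp
qed

lemma list_monomials_sum_by_head:
  assumes "finite S" and "[] \<notin> S"
  shows "(\<Sum>e\<in>S. c e * list_monomial e (case_nat s t))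
    = (\<Sum>d\<in>hd ` S. (\<Sum>e\<in>{e\<in>S. hd e = d}. c e * list_monomial (tl e) t) * s ^ d)"
proof -
  have "list_monomial e (case_nat s t) = s ^ hd e * list_monomial (tl e) t" if "e \<in> S" for e
    using that assms(2) by (cases e) auto
  then have "(\<Sum>d\<in>hd ` S. (\<Sum>e\<in>{e\<in>S. hd e = d}. c e * list_monomial (tl e) t) * s ^ d)
      = (\<Sum>d\<in>hd ` S. \<Sum>e\<in>{e\<in>S. hd e = d}. c e * list_monomial e (case_nat s t))"
    unfolding sum_distrib_right by (intro sum.cong refl) (simp add: mult_ac)
  also have "\<dots> = (\<Sum>e\<in>S. c e * list_monomial e (case_nat s t))"
    by (rule sum.group) (use assms in auto)
  finally show ?thesis ..
qed

text \<open>Induction on the number of variables: grouping by the exponent of x_0 writes the sum as a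
  polynomial in x_0 whose coefficients are sums of the same kind in the remaining variables.\<close>
lemma list_monomials_independent:
  fixes c :: "nat list \<Rightarrow> 'a::idom"
  assumes "infinite (UNIV :: 'a set)" and "finite S" and "\<forall>e\<in>S. length e = m"
    and "\<forall>x. (\<Sum>e\<in>S. c e * list_monomial e x) = 0"
  shows "\<forall>e\<in>S. c e = 0"
  using assms(2-4)
proof (induction m arbitrary: S c)
  case 0
  hence "S \<subseteq> {[]}" by auto
  with "0.prems"(3) show ?case
    by (cases "S = {}") (auto simp: subset_singleton_iff)
next
  case (Suc m)
  let ?S = "\<lambda>d. {e\<in>S. hd e = d}"
  have e_Cons: "e = hd e # tl e" if "e \<in> S" for e
    using Suc.prems(2) that by (cases e) auto
  have coeffs_vanish: "\<forall>d\<in>hd ` S. (\<Sum>e\<in>?S d. c e * list_monomial (tl e) t) = 0" for t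
  proof (rule univariate_monomials_independent[OF assms(1)])
    show "finite (hd ` S)" using Suc.prems(1) by simp
    show "\<forall>s. (\<Sum>d\<in>hd ` S. (\<Sum>e\<in>?S d. c e * list_monomial (tl e) t) * s ^ d) = 0"
      using Suc.prems list_monomials_sum_by_head[of S c] by fastforce
  qed
  show ?case
  proof
    fix e assume "e \<in> S"
    let ?T = "tl ` ?S (hd e)"
    have inj: "inj_on tl (?S (hd e))"
      by (rule inj_onI) (metis (mono_tags, lifting) e_Cons mem_Collect_eq)
    have "\<forall>u\<in>?T. c (hd e # u) = 0"
    proof (rule Suc.IH)
      show "finite ?T" "\<forall>u\<in>?T. length u = m"
        using Suc.prems by auto
      show "\<forall>x. (\<Sum>u\<in>?T. c (hd e # u) * list_monomial u x) = 0"
      proof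
        fix x
        have "(\<Sum>u\<in>?T. c (hd e # u) * list_monomial u x)
            = (\<Sum>e'\<in>?S (hd e). c (hd e # tl e') * list_monomial (tl e') x)"
          by (rule sum.reindex[OF inj, unfolded comp_def])
        also have "\<dots> = (\<Sum>e'\<in>?S (hd e). c e' * list_monomial (tl e') x)"
          by (rule sum.cong[OF refl]) (metis (mono_tags, lifting) e_Cons mem_Collect_eq)
        also have "\<dots> = 0"
          using coeffs_vanish \<open>e \<in> S\<close> by blast
        finally show "(\<Sum>u\<in>?T. c (hd e # u) * list_monomial u x) = 0" .
      qed
    qed
    moreover have "tl e \<in> ?T" using \<open>e \<in> S\<close> by auto
    ultimately show "c e = 0" using e_Cons[OF \<open>e \<in> S\<close>] by metis
  qed
qed

lemma list_monomial_pairs_independent: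
  fixes c :: "nat list \<times> nat list \<Rightarrow> 'a::idom"
  assumes "infinite (UNIV :: 'a set)" and "finite S"
    and "\<forall>(a, b)\<in>S. length a = n \<and> length b = n"
    and "\<forall>x y. (\<Sum>k\<in>S. c k * (list_monomial (fst k) x * list_monomial (snd k) y)) = 0"
  shows "\<forall>k\<in>S. c k = 0"
proof -
  define app where "app k = fst k @ snd k" for k :: "nat list \<times> nat list"
  have split_app: "(take n (app k), drop n (app k)) = k" if "k \<in> S" for k
    using assms(3) that by (cases k) (auto simp: app_def)
  have inj: "inj_on app S"
    by (rule inj_onI) (metis split_app)
  let ?c = "\<lambda>e. c (take n e, drop n e)"
  have "\<forall>e\<in>app ` S. ?c e = 0"
  proof (rule list_monomials_independent[OF assms(1)])
    show "finite (app ` S)" "\<forall>e\<in>app ` S. length e = n + n"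
      using assms(2,3) by (auto simp: app_def)
    show "\<forall>x. (\<Sum>e\<in>app ` S. ?c e * list_monomial e x) = 0"
    proof
      fix x :: "nat \<Rightarrow> 'a"
      have "(\<Sum>e\<in>app ` S. ?c e * list_monomial e x) = (\<Sum>k\<in>S. ?c (app k) * list_monomial (app k) x)"
        by (rule sum.reindex[OF inj, unfolded comp_def])
      also have "\<dots> = (\<Sum>k\<in>S. c k *
          (list_monomial (fst k) x * list_monomial (snd k) (\<lambda>i. x (n + i))))"
        using split_app assms(3) by (intro sum.cong) (auto simp: app_def list_monomial_append)
      also have "\<dots> = 0" using assms(4) by blast
      finally show "(\<Sum>e\<in>app ` S. ?c e * list_monomial e x) = 0" .
    qed
  qed
  thus ?thesis using split_app by auto
qed

definition strict_ut3 :: "'a::field \<Rightarrow> 'a \<Rightarrow> 'a \<Rightarrow> 'a mat" where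
  "strict_ut3 p q r = mat 3 3 (\<lambda>(i, j). if i = 0 \<and> j = 1 then p else if i = 1 \<and> j = 2 then q
      else if i = 0 \<and> j = 2 then r else 0)"

definition diag_ut3 :: "'a::field \<Rightarrow> 'a \<Rightarrow> 'a mat" where
  "diag_ut3 u v = mat 3 3 (\<lambda>(i, j). if i = j \<and> i = 1 then u else if i = j \<and> i = 2 then v else 0)"

lemma diag_ut3_in_UT3_comp_0: "diag_ut3 u v \<in> UT3_comp 0"
  by (auto simp: UT3_comp_def diag_ut3_def split: if_splits)

lemma strict_ut3_in_UT3_comp_1: "strict_ut3 p q 0 \<in> UT3_comp 1"
  by (auto simp: UT3_comp_def strict_ut3_def split: if_splits)

lemma lie_br_strict_diag:
  "lie_br (strict_ut3 p q r) (diag_ut3 u v) = strict_ut3 (p * u) (q * (v - u)) (r * v)"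
  unfolding lie_br_def
  by (rule eq_matI)
    (auto simp: strict_ut3_def diag_ut3_def scalar_prod_def less_Suc_eq numeral_eq_Suc algebra_simps)

lemma lie_br_strict_strict:
  "lie_br (strict_ut3 p q r) (strict_ut3 p' q' r') = strict_ut3 0 0 (p * q' - p' * q)"
  unfolding lie_br_def
  by (rule eq_matI)
    (auto simp: strict_ut3_def scalar_prod_def less_Suc_eq numeral_eq_Suc algebra_simps)

lemma lnc_append: "lnc x (us @ vs) = lnc (lnc x us) vs"
  by (induction us arbitrary: x) auto

lemma lnc_strict_replicate_diag:
  "lnc (strict_ut3 p q r) (replicate k (diag_ut3 u v))
    = strict_ut3 (p * u ^ k) (q * (v - u) ^ k) (r * v ^ k)"
  by (induction k arbitrary: p q r) (simp_all add: lie_br_strict_diag algebra_simps)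

lemma ypart_snoc: "ypart (a @ [k]) Y = ypart a Y @ replicate k (Y (length a))"
proof -
  have "map (\<lambda>i. replicate ((a @ [k]) ! i) (Y i)) [0..<length a]
      = map (\<lambda>i. replicate (a ! i) (Y i)) [0..<length a]"
    by (auto simp: nth_append)
  then show ?thesis by (simp add: ypart_def del: map_eq_conv)
qed

lemma lnc_strict_ypart_diag:
  "lnc (strict_ut3 p q r) (ypart a (\<lambda>i. diag_ut3 (x i) (y i)))
    = strict_ut3 (p * list_monomial a x) (q * list_monomial a (\<lambda>i. y i - x i))
        (r * list_monomial a y)"
proof (induction a rule: rev_induct)
  case Nil
  show ?case by (simp add: ypart_def)
next
  case (snoc k a)
  then show ?case
    by (simp add: ypart_snoc lnc_append lnc_strict_replicate_diag list_monomial_snoc mult.assoc)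
qed

lemma comm_eval_strict_diag:
  "comm_eval a b (\<lambda>i. diag_ut3 (x i) (y i)) (strict_ut3 1 0 0) (strict_ut3 0 1 0)
    = strict_ut3 0 0 (list_monomial a x * list_monomial b y)"
  by (simp add: comm_eval_def lnc_append lnc_strict_ypart_diag lie_br_strict_strict)

theorem mainTheorem9:
  fixes c :: "nat list \<times> nat list \<Rightarrow> 'a::field"
    and S :: "(nat list \<times> nat list) set"
    and n :: nat
  assumes "infinite (UNIV :: 'a set)"
    and "finite S"
    and "\<forall>(a, b) \<in> S. length a = n \<and> length b = n"
    and "\<forall>Y Z1 Z2. (\<forall>i. Y i \<in> UT3_comp 0) \<longrightarrow> Z1 \<in> UT3_comp 1 \<longrightarrow> Z2 \<in> UT3_comp 1 \<longrightarrow>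
           (\<forall>i<3. \<forall>j<3. (\<Sum>k\<in>S. c k * comm_eval (fst k) (snd k) Y Z1 Z2 $$ (i, j)) = 0)"
  shows "\<forall>k\<in>S. c k = 0"
proof (rule list_monomial_pairs_independent[OF assms(1-3)], intro allI)
  fix x y :: "nat \<Rightarrow> 'a"
  have "(\<Sum>k\<in>S. c k * comm_eval (fst k) (snd k) (\<lambda>i. diag_ut3 (x i) (y i))
      (strict_ut3 1 0 0) (strict_ut3 0 1 0) $$ (0, 2)) = 0"
    by (intro assms(4)[rule_format] diag_ut3_in_UT3_comp_0 strict_ut3_in_UT3_comp_1) simp_all
  then show "(\<Sum>k\<in>S. c k * (list_monomial (fst k) x * list_monomial (snd k) y)) = 0"
    unfolding comm_eval_strict_diag by (simp add: strict_ut3_def)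
qed

end
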